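(* Let $(\phi_t)$ be a parabolic semigroup in $\mathbb{H}$ with Denjoy--Wolff point $\infty$, and let its infinitesimal generator $G\colon \mathbb{H}\to\mathbb{H}$ have Herglotz representation $$G(z)=\alpha z+\beta+\int_{\mathbb{R}}\frac{1+sz}{s-z}\,d\mu(s),\qquad z\in\mathbb{H},$$ with $\alpha\ge 0$, $\beta\in\mathbb{R}$, $\mu$ a positive finite Borel measure on $\mathbb{R}$. Assume $$\alpha=0,\qquad \int_{\mathbb{R}}s^2\,d\mu(s)<+\infty,\qquad \beta=\int_{\mathbb{R}}s\,d\mu(s).$$ Then every orbit $t\mapsto\phi_t(z)$, $z\in\mathbb{H}$, converges to $\infty$ orthogonally, i.e. $\phi_t(z)\to\infty$ and $\arg(\phi_t(z))\to\pi/2$ as $t\to+\infty$.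
   Context: $\mathbb{H}=\{z\in\mathbb{C}:\mathrm{Im} z>0\}$. A semigroup in $\mathbb{H}$ is a family $(\phi_t)_{t\ge0}$ of holomorphic self-maps of $\mathbb{H}$ with $\phi_0=\mathrm{id}$, $\phi_{t+s}=\phi_t\circ\phi_s$ for all $t,s\ge0$, and $\phi_t(z)\to z$ as $t\to0^+$ for every $z$. It is non-elliptic if $\phi_t(z)\neq z$ for all $z\in\mathbb{H}$, $t>0$; then all orbits $\phi_t(z)$ converge as $t\to+\infty$ to a common boundary point, the Denjoy--Wolff point. With Denjoy--Wolff point $\infty$, there is $\lambda\ge0$ with $\angle\lim_{z\to\infty}\phi_t(z)/z=e^{\lambda t}$ for all $t$; the semigroup is parabolic if $\lambda=0$. The infinitesimal generator is the holomorphic map $G$ with $\partial_t\phi_t(z)=G(\phi_t(z))$ for all $z\in\mathbb{H}$, $t\ge0$; for non-elliptic semigroups with Denjoy--Wolff point $\infty$, $G$ maps $\mathbb{H}$ into $\mathbb{H}\cup\mathbb{R}$ and has a unique Herglotz representation as displayed. *)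

theory Defs
  imports "HOL-Complex_Analysis.Complex_Analysis"
begin

definition UHP :: "complex set" where
  "UHP = {z. Im z > 0}"

definition semigroup_H :: "(real \<Rightarrow> complex \<Rightarrow> complex) \<Rightarrow> bool" where
  "semigroup_H phi \<longleftrightarrow>
     (\<forall>t\<ge>0. phi t holomorphic_on UHP \<and> phi t ` UHP \<subseteq> UHP) \<and>
     (\<forall>z\<in>UHP. phi 0 z = z) \<and>
     (\<forall>t\<ge>0. \<forall>s\<ge>0. \<forall>z\<in>UHP. phi (t + s) z = phi t (phi s z)) \<and>
     (\<forall>z\<in>UHP. ((\<lambda>t. phi t z) \<longlongrightarrow> z) (at_right 0))"

definition non_elliptic :: "(real \<Rightarrow> complex \<Rightarrow> complex) \<Rightarrow> bool" where
  "non_elliptic phi \<longleftrightarrow> (\<forall>t>0. \<forall>z\<in>UHP. phi t z \<noteq> z)"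

definition DW_infinity :: "(real \<Rightarrow> complex \<Rightarrow> complex) \<Rightarrow> bool" where
  "DW_infinity phi \<longleftrightarrow> (\<forall>z\<in>UHP. filterlim (\<lambda>t. phi t z) at_infinity at_top)"

definition stolz_sector :: "real \<Rightarrow> complex set" where
  "stolz_sector e = {z. Im z > 0 \<and> e \<le> Arg z \<and> Arg z \<le> pi - e}"

definition angular_lim_infty :: "(complex \<Rightarrow> complex) \<Rightarrow> complex \<Rightarrow> bool" where
  "angular_lim_infty f L \<longleftrightarrow>
     (\<forall>e. 0 < e \<and> e < pi / 2 \<longrightarrow> (f \<longlongrightarrow> L) (inf at_infinity (principal (stolz_sector e))))"

text \<open>Parabolic: the angular derivative at infinity e^(lambda t) equals 1, i.e. lambda = 0.\<close>
definition parabolic :: "(real \<Rightarrow> complex \<Rightarrow> complex) \<Rightarrow> bool" where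
  "parabolic phi \<longleftrightarrow> (\<forall>t\<ge>0. angular_lim_infty (\<lambda>z. phi t z / z) 1)"

definition inf_generator :: "(real \<Rightarrow> complex \<Rightarrow> complex) \<Rightarrow> (complex \<Rightarrow> complex) \<Rightarrow> bool" where
  "inf_generator phi G \<longleftrightarrow> G holomorphic_on UHP \<and>
     (\<forall>z\<in>UHP. \<forall>t\<ge>0. ((\<lambda>s. phi s z) has_vector_derivative G (phi t z)) (at t within {0..}))"

end

theory Submission
  imports Defs
begin

(*
  With \<alpha> = 0 and \<beta> = \<integral> s d\<mu> the generator is the Cauchy transform
  G(w) = \<integral> (1 + s^2) / (s - w) d\<mu>(s) of the finite measure (1 + s^2) d\<mu>, whose total
  mass m is positive, and w G(w) = -m + \<integral> (1 + s^2) s / (s - w) d\<mu>(s).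

  Along an orbit w(t), once |w| is so large that less than a quarter of that mass lies
  in |s| > |w| / 4, the slope Re w / Im w decreases whenever it exceeds 1 and increases
  whenever it drops below -1. Hence the orbit eventually stays in a sector |w| \<le> D Im w.
  There the remaining integral tends to 0 by dominated convergence, so (w^2)' = 2 w G(w)
  tends to -2m, hence w(t)^2 / t tends to -2m and w(t) ~ i sqrt(2 m t).
*)

lemma Im_le_norm_of_real_minus: "Im w \<le> cmod (of_real s - w)"
  using abs_Im_le_cmod[of "of_real s - w"] by simp

lemma of_real_minus_neq_0: "Im w > 0 \<Longrightarrow> of_real s - w \<noteq> 0"
  using Im_le_norm_of_real_minus[of w s] by auto

lemma abs_le_one_plus_square: "\<bar>x::real\<bar> \<le> 1 + x\<^sup>2"
  using zero_le_power2[of "\<bar>x\<bar> - 1"] unfolding power2_diff by simp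

lemma abs_le_norm_of_real_minus_in_sector:
  assumes "Im w > 0" and "cmod w \<le> D * Im w"
  shows "\<bar>s\<bar> \<le> (1 + D) * cmod (of_real s - w)"
proof -
  have "0 < D * Im w"
    using assms abs_Im_le_cmod[of w] by linarith
  then have "D \<ge> 0"
    using assms(1) by (simp add: zero_less_mult_iff)
  have "\<bar>s\<bar> \<le> cmod (of_real s - w) + cmod w"
    using norm_triangle_ineq[of "of_real s - w" w] by simp
  also have "\<dots> \<le> cmod (of_real s - w) + D * cmod (of_real s - w)"
    using assms(2) mult_left_mono[OF Im_le_norm_of_real_minus[of w s] \<open>D \<ge> 0\<close>] by linarith
  finally show ?thesis
    by (simp add: algebra_simps)
qed

lemma eq_i_mult_csqrt_neg_square:
  assumes "Im z > 0"
  shows "z = \<i> * csqrt (- z\<^sup>2)"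
proof -
  have "(- \<i> * z)\<^sup>2 = - z\<^sup>2"
    by (simp add: power_mult_distrib)
  then have "csqrt (- z\<^sup>2) = - \<i> * z"
    using assms by (intro csqrt_unique) auto
  then show ?thesis
    by simp
qed

lemma sector_kernel_lower_bound:
  fixes a y s R :: real
  assumes "R > 0" and "2 * R \<le> a" and "0 < y" and "y \<le> a"
  shows "(if \<bar>s\<bar> \<le> R then 1/3 else -1) / a \<le> (2 * a - s) / ((s - a)\<^sup>2 + y\<^sup>2)"
proof -
  have "a > 0" and den: "(s - a)\<^sup>2 + y\<^sup>2 > 0"
    using assms by (auto simp: add_nonneg_pos)
  show ?thesis
  proof (cases "\<bar>s\<bar> \<le> R")
    case True
    have "\<bar>s - a\<bar> \<le> \<bar>3 * a / 2\<bar>"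
      using True assms by (auto simp: abs_le_iff)
    then have "(s - a)\<^sup>2 \<le> (3 * a / 2)\<^sup>2"
      by (simp only: abs_le_square_iff)
    moreover have "y\<^sup>2 \<le> a\<^sup>2"
      using assms by (simp add: power_mono)
    moreover have "3 * a * (3 * a / 2) \<le> 3 * a * (2 * a - s)"
      using True assms \<open>a > 0\<close> by (intro mult_left_mono) auto
    moreover have "(3 * a / 2)\<^sup>2 = 9/4 * a\<^sup>2" and "3 * a * (3 * a / 2) = 9/2 * a\<^sup>2"
      by (simp_all add: power2_eq_square)
    ultimately have "(s - a)\<^sup>2 + y\<^sup>2 \<le> 3 * a * (2 * a - s)"
      using zero_le_power2[of a] by linarith
    then show ?thesis
      using True den \<open>a > 0\<close> by (simp add: field_simps)
  next
    case False
    have "(s - a)\<^sup>2 + y\<^sup>2 - a * (s - 2 * a) = ((2 * s - 3 * a)\<^sup>2 + 3 * a\<^sup>2 + 4 * y\<^sup>2) / 4"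
      by (simp add: power2_eq_square algebra_simps)
    moreover have "0 \<le> ((2 * s - 3 * a)\<^sup>2 + 3 * a\<^sup>2 + 4 * y\<^sup>2) / 4"
      by simp
    ultimately have "a * (s - 2 * a) \<le> (s - a)\<^sup>2 + y\<^sup>2"
      by linarith
    then show ?thesis
      using False den \<open>a > 0\<close> by (simp add: field_simps)
  qed
qed

lemma le_max_if_deriv_neg_above:
  fixes f f' :: "real \<Rightarrow> real"
  assumes deriv: "\<And>t. t \<ge> T \<Longrightarrow> (f has_real_derivative f' t) (at t)"
    and neg: "\<And>t. t \<ge> T \<Longrightarrow> f t > c \<Longrightarrow> f' t < 0"
    and "t \<ge> T"
  shows "f t \<le> max c (f T)"
proof (rule ccontr)
  assume above: "\<not> f t \<le> max c (f T)"
  have "continuous_on {T..t} f"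
    using deriv by (intro continuous_at_imp_continuous_on ballI DERIV_isCont) auto
  then obtain m where m: "m \<in> {T..t}" and max: "\<And>y. y \<in> {T..t} \<Longrightarrow> f y \<le> f m"
    using continuous_attains_sup[of "{T..t}" f] \<open>t \<ge> T\<close> by auto
  have "f m > max c (f T)"
    using max[of t] \<open>t \<ge> T\<close> above by auto
  then have "m \<noteq> T" and "f' m < 0"
    using m neg[of m] by auto
  with m have "m > T"
    by simp
  then have "(f has_real_derivative f' m) (at m)"
    using deriv by simp
  then obtain d where "d > 0" and dec: "\<And>h. 0 < h \<Longrightarrow> h < d \<Longrightarrow> f m < f (m - h)"
    using DERIV_neg_dec_left \<open>f' m < 0\<close> by blast
  define h where "h = min (d / 2) (m - T)"
  have "f m < f (m - h)"
    using dec \<open>d > 0\<close> \<open>m > T\<close> unfolding h_def by auto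
  moreover have "m - h \<in> {T..t}"
    using m \<open>d > 0\<close> \<open>m > T\<close> unfolding h_def by auto
  ultimately show False
    using max by fastforce
qed

lemma has_real_derivative_Re_divide_Im:
  fixes w :: "real \<Rightarrow> complex"
  assumes "(w has_vector_derivative w') (at t)" and "Im (w t) \<noteq> 0"
  shows "((\<lambda>t. Re (w t) / Im (w t)) has_real_derivative - Im (cnj (w t) * w') / (Im (w t))\<^sup>2) (at t)"
proof -
  have "((\<lambda>t. Re (w t)) has_real_derivative Re w') (at t)"
    and "((\<lambda>t. Im (w t)) has_real_derivative Im w') (at t)"
    using bounded_linear.has_vector_derivative[OF bounded_linear_Re assms(1)]
      bounded_linear.has_vector_derivative[OF bounded_linear_Im assms(1)]
    by (simp_all add: has_real_derivative_iff_has_vector_derivative)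
  from DERIV_divide[OF this assms(2)] show ?thesis
    by (rule DERIV_cong) (simp add: power2_eq_square algebra_simps)
qed

lemma norm_diff_le_if_vector_derivative_bounded:
  fixes f f' :: "real \<Rightarrow> 'a::real_normed_vector"
  assumes "\<And>t. t \<ge> T \<Longrightarrow> (f has_vector_derivative f' t) (at t within {T..})"
    and "\<And>t. t \<ge> T \<Longrightarrow> norm (f' t) \<le> B" and "t \<ge> T"
  shows "norm (f t - f T) \<le> B * (t - T)"
proof -
  have "norm (f t - f T) \<le> B * norm (t - T)"
  proof (rule differentiable_bound[of "{T..}" f "\<lambda>t s. s *\<^sub>R f' t"])
    show "(f has_derivative (\<lambda>s. s *\<^sub>R f' x)) (at x within {T..})" if "x \<in> {T..}" for x
      using assms(1) that by (simp add: has_vector_derivative_def)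
    show "onorm (\<lambda>s. s *\<^sub>R f' x) \<le> B" if "x \<in> {T..}" for x
      using assms(2)[of x] that
      by (intro onorm_le) (metis abs_ge_zero atLeast_iff mult.commute mult_left_mono norm_scaleR real_norm_def)
  qed (use assms(3) in auto)
  then show ?thesis
    using assms(3) by simp
qed

lemma tendsto_scaleR_inverse_if_derivative_tendsto:
  fixes W W' :: "real \<Rightarrow> 'a::real_normed_vector"
  assumes deriv: "\<And>t. t \<ge> T \<Longrightarrow> (W has_vector_derivative W' t) (at t within {T..})"
    and lim: "(W' \<longlongrightarrow> c) at_top"
  shows "((\<lambda>t. W t /\<^sub>R t) \<longlongrightarrow> c) at_top"
proof (rule tendstoI)
  fix e :: real
  assume "e > 0"
  obtain N where N: "\<And>t. t \<ge> N \<Longrightarrow> norm (W' t - c) < e / 2"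
    using tendstoD[OF lim, of "e / 2"] \<open>e > 0\<close> by (auto simp: eventually_at_top_linorder dist_norm)
  define T1 where "T1 = max N (max T 1)"
  have T1: "T1 \<ge> T" "T1 \<ge> 1" and close: "\<And>t. t \<ge> T1 \<Longrightarrow> norm (W' t - c) \<le> e / 2"
    unfolding T1_def using N by (auto intro: less_imp_le)
  have "0 < T1 * e"
    using T1 \<open>e > 0\<close> by simp
  define h where "h t = W t - t *\<^sub>R c" for t
  have h_bound: "norm (h t - h T1) \<le> e / 2 * (t - T1)" if "t \<ge> T1" for t
  proof (rule norm_diff_le_if_vector_derivative_bounded[OF _ close that])
    show "(h has_vector_derivative W' t - c) (at t within {T1..})" if "t \<ge> T1" for t
      unfolding h_def using T1 that
      by (auto intro!: derivative_eq_intros has_vector_derivative_within_subset[OF deriv])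
  qed
  show "\<forall>\<^sub>F t in at_top. dist (W t /\<^sub>R t) c < e"
    unfolding eventually_at_top_linorder
  proof (intro exI allI impI)
    fix t
    assume t: "t \<ge> max T1 (2 * norm (h T1) / e + 1)"
    then have "t > 0" "norm (h T1) < e / 2 * t"
      using T1 \<open>e > 0\<close> by (auto simp: field_simps)
    have "W t /\<^sub>R t - c = h t /\<^sub>R t"
      using \<open>t > 0\<close> by (simp add: h_def scaleR_diff_right)
    then have "dist (W t /\<^sub>R t) c = norm (h T1 + (h t - h T1)) / t"
      using \<open>t > 0\<close> by (simp add: dist_norm divide_inverse_commute)
    also have "\<dots> \<le> (norm (h T1) + e / 2 * (t - T1)) / t"
      using h_bound[of t] t \<open>t > 0\<close> norm_triangle_ineq[of "h T1" "h t - h T1"]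
      by (intro divide_right_mono) auto
    also have "\<dots> < e"
      using \<open>norm (h T1) < e / 2 * t\<close> \<open>t > 0\<close> \<open>0 < T1 * e\<close> by (simp add: field_simps)
    finally show "dist (W t /\<^sub>R t) c < e" .
  qed
qed

lemma Arg_tendsto_pi_half_if_square_tendsto_neg:
  fixes w :: "real \<Rightarrow> complex"
  assumes Im_pos: "\<forall>\<^sub>F t in at_top. Im (w t) > 0"
    and lim: "((\<lambda>t. (w t)\<^sup>2 /\<^sub>R t) \<longlongrightarrow> - of_real c) at_top" and "c > 0"
  shows "((\<lambda>t. Arg (w t)) \<longlongrightarrow> pi / 2) at_top"
proof -
  have "of_real c \<notin> \<real>\<^sub>\<le>\<^sub>0" and i_sqrt: "\<i> * of_real (sqrt c) \<notin> \<real>\<^sub>\<le>\<^sub>0"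
    using \<open>c > 0\<close> by (auto simp: complex_nonpos_Reals_iff)
  moreover have "((\<lambda>t. - ((w t)\<^sup>2 /\<^sub>R t)) \<longlongrightarrow> of_real c) at_top"
    using tendsto_minus[OF lim] by simp
  ultimately have "((\<lambda>t. csqrt (- ((w t)\<^sup>2 /\<^sub>R t))) \<longlongrightarrow> of_real (sqrt c)) at_top"
    using isCont_tendsto_compose[OF continuous_at_csqrt] \<open>c > 0\<close> by (metis csqrt_of_real less_imp_le)
  then have "((\<lambda>t. Arg (\<i> * csqrt (- ((w t)\<^sup>2 /\<^sub>R t)))) \<longlongrightarrow> Arg (\<i> * of_real (sqrt c))) at_top"
    using i_sqrt by (intro isCont_tendsto_compose[OF continuous_at_Arg] tendsto_mult_left) auto
  moreover have "\<forall>\<^sub>F t in at_top. Arg (\<i> * csqrt (- ((w t)\<^sup>2 /\<^sub>R t))) = Arg (w t)"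
    using Im_pos eventually_gt_at_top[of 0]
  proof eventually_elim
    case (elim t)
    define v where "v = w t /\<^sub>R sqrt t"
    have "(inverse (sqrt t))\<^sup>2 = inverse t"
      using elim by (simp add: power_inverse)
    then have "Im v > 0" and "v\<^sup>2 = (w t)\<^sup>2 /\<^sub>R t"
      using elim by (simp_all add: v_def scaleR_power)
    then have "\<i> * csqrt (- ((w t)\<^sup>2 /\<^sub>R t)) = v"
      using eq_i_mult_csqrt_neg_square[of v] by simp
    then show ?case
      using Arg_times_of_real[of "inverse (sqrt t)" "w t"] elim(2) by (simp add: v_def scaleR_conv_of_real)
  qed
  ultimately show ?thesis
    using \<open>c > 0\<close> by (simp add: Arg_times_of_real2 tendsto_cong)
qed

definition cauchy_kernel :: "complex \<Rightarrow> real \<Rightarrow> complex" where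
  "cauchy_kernel w s = of_real (1 + s\<^sup>2) / (of_real s - w)"

lemma norm_cauchy_kernel_le:
  assumes "Im w > 0"
  shows "norm (cauchy_kernel w s) \<le> (1 + s\<^sup>2) / Im w"
proof -
  have "norm (cauchy_kernel w s) = (1 + s\<^sup>2) / cmod (of_real s - w)"
    unfolding cauchy_kernel_def norm_divide norm_of_real by (simp add: add_nonneg_nonneg)
  also have "\<dots> \<le> (1 + s\<^sup>2) / Im w"
    using assms Im_le_norm_of_real_minus[of w s]
    by (intro divide_left_mono mult_pos_pos) (auto simp: add_pos_nonneg)
  finally show ?thesis .
qed

lemma herglotz_kernel_eq_cauchy_kernel:
  assumes "Im w > 0"
  shows "(1 + of_real s * w) / (of_real s - w) = cauchy_kernel w s - of_real s"
  unfolding cauchy_kernel_def using of_real_minus_neq_0[OF assms]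
  by (simp add: field_simps power2_eq_square)

lemma of_real_mult_cauchy_kernel:
  assumes "Im w > 0"
  shows "of_real s * cauchy_kernel w s = w * cauchy_kernel w s + of_real (1 + s\<^sup>2)"
  unfolding cauchy_kernel_def using of_real_minus_neq_0[OF assms]
  by (simp add: field_simps)

lemma Im_cnj_mult_cauchy_kernel:
  "Im (cnj w * cauchy_kernel w s) = (1 + s\<^sup>2) * Im w * (2 * Re w - s) / ((s - Re w)\<^sup>2 + (Im w)\<^sup>2)"
  by (cases w) (simp add: cauchy_kernel_def Im_divide Re_divide field_simps power2_eq_square)

lemma Im_cnj_mult_cauchy_kernel_lower_bound:
  assumes "\<sigma> \<in> {-1, 1}" and "R > 0" and "0 < Im w" "Im w \<le> \<sigma> * Re w" and "2 * R \<le> \<sigma> * Re w"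
  shows "(1 + s\<^sup>2) * Im w * ((if \<bar>s\<bar> \<le> R then 1/3 else -1) / (\<sigma> * Re w))
    \<le> \<sigma> * Im (cnj w * cauchy_kernel w s)"
proof -
  define a where "a = \<sigma> * Re w"
  have numerator: "\<sigma> * (2 * Re w - s) = 2 * a - \<sigma> * s"
    and denominator: "(s - Re w)\<^sup>2 = (\<sigma> * s - a)\<^sup>2" and "\<bar>\<sigma> * s\<bar> = \<bar>s\<bar>"
    using assms(1) unfolding a_def by (auto simp: power2_eq_square algebra_simps)
  have "\<sigma> * Im (cnj w * cauchy_kernel w s)
      = (1 + s\<^sup>2) * Im w * (\<sigma> * (2 * Re w - s) / ((s - Re w)\<^sup>2 + (Im w)\<^sup>2))"
    by (simp only: Im_cnj_mult_cauchy_kernel times_divide_eq_right mult_ac)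
  also have "\<dots> = (1 + s\<^sup>2) * Im w * ((2 * a - \<sigma> * s) / ((\<sigma> * s - a)\<^sup>2 + (Im w)\<^sup>2))"
    by (simp only: numerator denominator)
  finally have kernel: "\<sigma> * Im (cnj w * cauchy_kernel w s)
      = (1 + s\<^sup>2) * Im w * ((2 * a - \<sigma> * s) / ((\<sigma> * s - a)\<^sup>2 + (Im w)\<^sup>2))" .
  have "(if \<bar>\<sigma> * s\<bar> \<le> R then 1/3 else -1) / a \<le> (2 * a - \<sigma> * s) / ((\<sigma> * s - a)\<^sup>2 + (Im w)\<^sup>2)"
    using assms unfolding a_def by (intro sector_kernel_lower_bound) auto
  then show ?thesis
    unfolding kernel a_def[symmetric] \<open>\<bar>\<sigma> * s\<bar> = \<bar>s\<bar>\<close> using assms(3)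
    by (intro mult_left_mono) (simp_all add: add_nonneg_nonneg)
qed

lemma norm_of_real_mult_cauchy_kernel_le_in_sector:
  assumes "Im w > 0" and "cmod w \<le> D * Im w"
  shows "norm (of_real s * cauchy_kernel w s) \<le> (1 + s\<^sup>2) * (1 + D)"
proof -
  have "\<bar>s\<bar> / cmod (of_real s - w) \<le> 1 + D"
    using abs_le_norm_of_real_minus_in_sector[OF assms, of s] of_real_minus_neq_0[OF assms(1), of s]
    by (simp add: divide_simps)
  then have "(1 + s\<^sup>2) * (\<bar>s\<bar> / cmod (of_real s - w)) \<le> (1 + s\<^sup>2) * (1 + D)"
    by (intro mult_left_mono) (simp_all add: add_nonneg_nonneg)
  moreover have "norm (of_real s * cauchy_kernel w s) = (1 + s\<^sup>2) * (\<bar>s\<bar> / cmod (of_real s - w))"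
    unfolding cauchy_kernel_def norm_mult norm_divide norm_of_real by (simp add: add_nonneg_nonneg)
  ultimately show ?thesis
    by simp
qed

lemma of_real_mult_cauchy_kernel_tendsto_0:
  assumes "filterlim w at_infinity F"
  shows "((\<lambda>t. of_real s * cauchy_kernel (w t) s) \<longlongrightarrow> 0) F"
proof -
  have "filterlim (\<lambda>t. w t - of_real s) at_infinity F"
    using tendsto_add_filterlim_at_infinity'[OF assms tendsto_const[of "- of_real s"]] by simp
  then have "filterlim (\<lambda>t. of_real s - w t) at_infinity F"
    by (simp add: filterlim_at_infinity_conv_norm_at_top norm_minus_commute)
  then show ?thesis
    unfolding cauchy_kernel_def times_divide_eq_right by (rule tendsto_divide_0[OF tendsto_const])
qed

locale finite_second_moment = finite_measure M for M :: "real measure" +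
  assumes sets_eq_borel: "sets M = sets borel"
    and integrable_square: "integrable M (\<lambda>s. s\<^sup>2)"
begin

lemma borel_measurable_of_borel: "f \<in> borel_measurable borel \<Longrightarrow> f \<in> borel_measurable M"
  using measurable_cong_sets[OF sets_eq_borel refl] by blast

lemma integrable_one_plus_square: "integrable M (\<lambda>s. 1 + s\<^sup>2)"
  by (intro Bochner_Integration.integrable_add integrable_const integrable_square)

lemma integrable_id: "integrable M (\<lambda>s. s)"
  by (rule Bochner_Integration.integrable_bound[OF integrable_one_plus_square])
    (auto intro!: borel_measurable_of_borel simp: abs_le_one_plus_square)

lemma integrable_cauchy_kernel:
  assumes "Im w > 0"
  shows "integrable M (cauchy_kernel w)"
proof (rule Bochner_Integration.integrable_bound)
  show "integrable M (\<lambda>s. (1 + s\<^sup>2) / Im w)"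
    using integrable_one_plus_square by simp
  show "cauchy_kernel w \<in> borel_measurable M"
    unfolding cauchy_kernel_def by (intro borel_measurable_of_borel) measurable
  show "AE s in M. norm (cauchy_kernel w s) \<le> norm ((1 + s\<^sup>2) / Im w)"
    using norm_cauchy_kernel_le[OF assms] assms by (intro AE_I2) (simp add: add_pos_nonneg)
qed

definition mass :: real where
  "mass = (LINT s|M. 1 + s\<^sup>2)"

definition cauchy_transform :: "complex \<Rightarrow> complex" where
  "cauchy_transform w = integral\<^sup>L M (cauchy_kernel w)"

definition cauchy_remainder :: "complex \<Rightarrow> complex" where
  "cauchy_remainder w = (LINT s|M. of_real s * cauchy_kernel w s)"

lemma herglotz_integral_eq_cauchy_transform:
  assumes "Im w > 0"
  shows "of_real (LINT s|M. s) + (LINT s|M. (1 + of_real s * w) / (of_real s - w)) = cauchy_transform w"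
  unfolding herglotz_kernel_eq_cauchy_kernel[OF assms] cauchy_transform_def
  by (simp add: Bochner_Integration.integral_diff[OF integrable_cauchy_kernel[OF assms]
      integrable_of_real[OF integrable_id]])

lemma mult_cauchy_transform:
  assumes "Im w > 0"
  shows "w * cauchy_transform w = cauchy_remainder w - of_real mass"
proof -
  have "cauchy_remainder w = w * cauchy_transform w + of_real mass"
    unfolding cauchy_remainder_def of_real_mult_cauchy_kernel[OF assms] cauchy_transform_def mass_def
    by (simp add: Bochner_Integration.integral_add[OF integrable_mult_right[OF integrable_cauchy_kernel[OF assms]]
        integrable_of_real[OF integrable_one_plus_square]] del: of_real_add of_real_power)
  then show ?thesis
    by simp
qed

lemma mass_nonneg: "mass \<ge> 0"
  unfolding mass_def by (simp add: add_nonneg_nonneg)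

lemma cauchy_transform_eq_0_if_mass_eq_0:
  assumes "mass = 0"
  shows "cauchy_transform w = 0"
proof -
  have "AE s in M. 1 + s\<^sup>2 = 0"
    using assms integral_nonneg_eq_0_iff_AE[OF integrable_one_plus_square]
    unfolding mass_def by (simp add: add_nonneg_nonneg)
  then have "AE s in M. False"
    by (rule AE_mp) (simp add: add_nonneg_eq_0_iff)
  then show ?thesis
    unfolding cauchy_transform_def by (auto intro: integral_eq_zero_AE elim: AE_mp)
qed

lemma Im_cnj_mult_cauchy_transform:
  assumes "Im w > 0"
  shows "Im (cnj w * cauchy_transform w) = (LINT s|M. Im (cnj w * cauchy_kernel w s))"
  unfolding cauchy_transform_def using integrable_cauchy_kernel[OF assms] by simp

definition tail_mass :: "real \<Rightarrow> real" where
  "tail_mass R = (LINT s|M. (if R < \<bar>s\<bar> then 1 + s\<^sup>2 else 0))"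

lemma integrable_tail: "integrable M (\<lambda>s. if R < \<bar>s\<bar> then 1 + s\<^sup>2 else 0)"
  by (rule Bochner_Integration.integrable_bound[OF integrable_one_plus_square])
    (auto intro!: borel_measurable_of_borel simp: add_nonneg_nonneg)

lemma tail_mass_tendsto_0: "(tail_mass \<longlongrightarrow> 0) at_top"
proof -
  have "((\<lambda>R. tail_mass R) \<longlongrightarrow> (LINT s|M. 0)) at_top"
    unfolding tail_mass_def
  proof (rule integral_dominated_convergence_at_top[OF _ _ integrable_one_plus_square])
    show "AE s in M. ((\<lambda>R. if R < \<bar>s\<bar> then 1 + s\<^sup>2 else 0) \<longlongrightarrow> 0) at_top"
    proof (intro AE_I2)
      fix s :: real
      show "((\<lambda>R. if R < \<bar>s\<bar> then 1 + s\<^sup>2 else 0) \<longlongrightarrow> 0) at_top"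
        by (intro tendsto_eventually eventually_mono[OF eventually_ge_at_top[of "\<bar>s\<bar>"]]) auto
    qed
    show "\<forall>\<^sub>F R in at_top. AE s in M. norm (if R < \<bar>s\<bar> then 1 + s\<^sup>2 else 0) \<le> 1 + s\<^sup>2"
      by (intro always_eventually allI AE_I2) (simp add: add_nonneg_nonneg)
  qed (auto intro!: borel_measurable_of_borel)
  then show ?thesis
    by simp
qed

lemma tail_mass_small:
  assumes "mass > 0"
  shows "\<exists>R>0. 4 * tail_mass R < mass"
proof -
  have "\<forall>\<^sub>F R in at_top. tail_mass R < mass / 4"
    using assms by (intro order_tendstoD(2)[OF tail_mass_tendsto_0]) simp
  then obtain N where N: "\<And>R. R \<ge> N \<Longrightarrow> tail_mass R < mass / 4"
    by (auto simp: eventually_at_top_linorder)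
  have "4 * tail_mass (max N 1) < mass"
    using N[OF max.cobounded1, of 1] by linarith
  then show ?thesis
    by (intro exI[of _ "max N 1"]) auto
qed

lemma Im_cnj_mult_cauchy_transform_sign:
  assumes "\<sigma> \<in> {-1, 1}" and "R > 0" and "4 * tail_mass R < mass"
    and "0 < Im w" "Im w \<le> \<sigma> * Re w" and "2 * R \<le> \<sigma> * Re w"
  shows "\<sigma> * Im (cnj w * cauchy_transform w) > 0"
proof -
  define a where "a = \<sigma> * Re w"
  have "a > 0"
    using assms unfolding a_def by linarith
  have pointwise: "Im w / a * ((1 + s\<^sup>2) / 3 - 4 / 3 * (if R < \<bar>s\<bar> then 1 + s\<^sup>2 else 0))
      \<le> \<sigma> * Im (cnj w * cauchy_kernel w s)" for s
  proof -
    have "Im w / a * ((1 + s\<^sup>2) / 3 - 4 / 3 * (if R < \<bar>s\<bar> then 1 + s\<^sup>2 else 0))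
        = (1 + s\<^sup>2) * Im w * ((if \<bar>s\<bar> \<le> R then 1/3 else -1) / a)"
      using \<open>a > 0\<close> by (simp add: field_simps)
    then show ?thesis
      unfolding a_def by (rule ord_eq_le_trans) (rule Im_cnj_mult_cauchy_kernel_lower_bound[OF assms(1,2,4-6)])
  qed
  have "0 < Im w / a * (mass / 3 - 4 / 3 * tail_mass R)"
    using assms \<open>a > 0\<close> by simp
  also have "\<dots> = (LINT s|M. Im w / a * ((1 + s\<^sup>2) / 3 - 4 / 3 * (if R < \<bar>s\<bar> then 1 + s\<^sup>2 else 0)))"
    unfolding mass_def tail_mass_def using integrable_one_plus_square integrable_tail by simp
  also have "\<dots> \<le> (LINT s|M. \<sigma> * Im (cnj w * cauchy_kernel w s))"
    using pointwise integrable_one_plus_square integrable_tail integrable_cauchy_kernel[OF assms(4)]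
    by (intro integral_mono) simp_all
  also have "\<dots> = \<sigma> * Im (cnj w * cauchy_transform w)"
    using Im_cnj_mult_cauchy_transform[OF assms(4)] by simp
  finally show ?thesis .
qed

lemma cauchy_remainder_tendsto_0:
  fixes w :: "real \<Rightarrow> complex"
  assumes "filterlim w at_infinity at_top"
    and sector: "\<forall>\<^sub>F t in at_top. Im (w t) > 0 \<and> cmod (w t) \<le> D * Im (w t)"
  shows "((\<lambda>t. cauchy_remainder (w t)) \<longlongrightarrow> 0) at_top"
proof -
  have "((\<lambda>t. cauchy_remainder (w t)) \<longlongrightarrow> (LINT s|M. 0)) at_top"
    unfolding cauchy_remainder_def
  proof (rule integral_dominated_convergence_at_top[where w="\<lambda>s. (1 + s\<^sup>2) * (1 + D)"])
    show "AE s in M. ((\<lambda>t. of_real s * cauchy_kernel (w t) s) \<longlongrightarrow> 0) at_top"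
      using assms(1) by (intro AE_I2 of_real_mult_cauchy_kernel_tendsto_0)
    show "\<forall>\<^sub>F t in at_top. AE s in M. norm (of_real s * cauchy_kernel (w t) s) \<le> (1 + s\<^sup>2) * (1 + D)"
      using sector by eventually_elim (auto intro: AE_I2 norm_of_real_mult_cauchy_kernel_le_in_sector)
  qed (auto intro!: borel_measurable_of_borel integrable_one_plus_square simp: cauchy_kernel_def)
  then show ?thesis
    by simp
qed

end

locale herglotz_orbit = finite_second_moment +
  fixes w :: "real \<Rightarrow> complex"
  assumes Im_orbit_pos: "\<And>t. t \<ge> 0 \<Longrightarrow> Im (w t) > 0"
    and orbit_derivative: "\<And>t. t \<ge> 0 \<Longrightarrow> (w has_vector_derivative cauchy_transform (w t)) (at t within {0..})"
    and orbit_tendsto_infinity: "filterlim w at_infinity at_top"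
begin

lemma mass_pos: "mass > 0"
proof (rule ccontr)
  assume "\<not> mass > 0"
  then have "mass = 0"
    using mass_nonneg by simp
  then obtain c where "\<And>t. t \<in> {0..} \<Longrightarrow> w t = c"
    using orbit_derivative cauchy_transform_eq_0_if_mass_eq_0
    by (metis atLeast_iff convex_real_interval(1) has_vector_derivative_zero_constant)
  then have "(w \<longlongrightarrow> c) at_top"
    by (intro tendsto_eventually eventually_mono[OF eventually_ge_at_top[of 0]]) auto
  then show False
    using not_tendsto_and_filterlim_at_infinity[OF _ _ orbit_tendsto_infinity] by simp
qed

lemma orbit_has_vector_derivative_at:
  assumes "t > 0"
  shows "(w has_vector_derivative cauchy_transform (w t)) (at t)"
proof -
  have "(w has_vector_derivative cauchy_transform (w t)) (at t within {0<..})"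
    using orbit_derivative[of t] assms by (auto intro: has_vector_derivative_within_subset)
  then show ?thesis
    using at_within_open[of t "{0<..}"] assms by simp
qed

lemma orbit_slope_bounded:
  assumes "\<sigma> \<in> {-1, 1}"
  shows "\<exists>T B. \<forall>t\<ge>T. \<sigma> * Re (w t) / Im (w t) \<le> B"
proof -
  obtain R where "R > 0" and tail: "4 * tail_mass R < mass"
    using tail_mass_small[OF mass_pos] by blast
  have "\<forall>\<^sub>F t in at_top. 4 * R \<le> cmod (w t)"
    using filterlim_at_infinity_imp_norm_at_top[OF orbit_tendsto_infinity] by (simp add: filterlim_at_top)
  then obtain T0 where T0: "\<And>t. t \<ge> T0 \<Longrightarrow> 4 * R \<le> cmod (w t)"
    by (auto simp: eventually_at_top_linorder)
  define T where "T = max T0 1"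
  have far: "t \<ge> 1 \<and> 4 * R \<le> cmod (w t)" if "t \<ge> T" for t
    using T0[of t] that unfolding T_def by auto
  define u where "u t = \<sigma> * (Re (w t) / Im (w t))" for t
  define u' where "u' t = \<sigma> * (- Im (cnj (w t) * cauchy_transform (w t)) / (Im (w t))\<^sup>2)" for t
  have "(u has_real_derivative u' t) (at t)" if "t \<ge> T" for t
    unfolding u_def u'_def using far[OF that] Im_orbit_pos[of t]
    by (intro DERIV_cmult has_real_derivative_Re_divide_Im orbit_has_vector_derivative_at) auto
  moreover have "u' t < 0" if "t \<ge> T" and "u t > 1" for t
  proof -
    have "0 < Im (w t)"
      using far[OF that(1)] Im_orbit_pos by simp
    moreover from this have "Im (w t) < \<sigma> * Re (w t)"
      using that(2) unfolding u_def by (simp add: field_simps)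
    moreover from calculation have "2 * R \<le> \<sigma> * Re (w t)"
      using far[OF that(1)] cmod_le[of "w t"] assms by auto
    ultimately have "\<sigma> * Im (cnj (w t) * cauchy_transform (w t)) > 0"
      by (intro Im_cnj_mult_cauchy_transform_sign[OF assms \<open>R > 0\<close> tail]) auto
    then show ?thesis
      unfolding u'_def using \<open>0 < Im (w t)\<close> by (simp add: field_simps)
  qed
  ultimately have "u t \<le> max 1 (u T)" if "t \<ge> T" for t
    using le_max_if_deriv_neg_above[of T u u' 1] that by blast
  then show ?thesis
    unfolding u_def by auto
qed

lemma orbit_eventually_in_sector:
  "\<exists>D. \<forall>\<^sub>F t in at_top. Im (w t) > 0 \<and> cmod (w t) \<le> D * Im (w t)"
proof -
  obtain T1 B1 T2 B2 where "\<forall>t\<ge>T1. Re (w t) / Im (w t) \<le> B1" and "\<forall>t\<ge>T2. - Re (w t) / Im (w t) \<le> B2"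
    using orbit_slope_bounded[of 1] orbit_slope_bounded[of "-1"] by auto
  then have "Im (w t) > 0 \<and> cmod (w t) \<le> (max B1 B2 + 1) * Im (w t)" if "t \<ge> max (max T1 T2) 0" for t
  proof -
    have "Im (w t) > 0"
      using Im_orbit_pos that by simp
    then have "Re (w t) \<le> B1 * Im (w t)" and "- Re (w t) \<le> B2 * Im (w t)"
      using that \<open>\<forall>t\<ge>T1. _\<close> \<open>\<forall>t\<ge>T2. _\<close> pos_divide_le_eq[of "Im (w t)"]
        pos_divide_le_eq[of "Im (w t)" "- Re (w t)" B2] by auto
    moreover have "B1 * Im (w t) \<le> max B1 B2 * Im (w t)" and "B2 * Im (w t) \<le> max B1 B2 * Im (w t)"
      using \<open>Im (w t) > 0\<close> by (simp_all add: mult_right_mono)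
    ultimately have "\<bar>Re (w t)\<bar> \<le> max B1 B2 * Im (w t)"
      by linarith
    then show ?thesis
      using \<open>Im (w t) > 0\<close> cmod_le[of "w t"] by (simp add: algebra_simps)
  qed
  then show ?thesis
    unfolding eventually_at_top_linorder
    by (intro exI[of _ "max B1 B2 + 1"] exI[of _ "max (max T1 T2) 0"]) auto
qed

lemma orbit_square_asymptotics: "((\<lambda>t. (w t)\<^sup>2 /\<^sub>R t) \<longlongrightarrow> - of_real (2 * mass)) at_top"
proof (rule tendsto_scaleR_inverse_if_derivative_tendsto)
  show "((\<lambda>t. (w t)\<^sup>2) has_vector_derivative 2 * (cauchy_remainder (w t) - of_real mass)) (at t within {0..})"
    if "t \<ge> 0" for t
  proof -
    have "((\<lambda>t. w t * w t) has_vector_derivative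
        w t * cauchy_transform (w t) + cauchy_transform (w t) * w t) (at t within {0..})"
      by (rule has_vector_derivative_mult[OF orbit_derivative[OF that] orbit_derivative[OF that]])
    then show ?thesis
      using mult_cauchy_transform[OF Im_orbit_pos[OF that]] by (simp add: power2_eq_square mult.commute)
  qed
  obtain D where "\<forall>\<^sub>F t in at_top. Im (w t) > 0 \<and> cmod (w t) \<le> D * Im (w t)"
    using orbit_eventually_in_sector by blast
  from cauchy_remainder_tendsto_0[OF orbit_tendsto_infinity this]
  show "((\<lambda>t. 2 * (cauchy_remainder (w t) - of_real mass)) \<longlongrightarrow> - of_real (2 * mass)) at_top"
    by (auto intro!: tendsto_eq_intros)
qed

lemma orbit_Arg_tendsto_pi_half: "((\<lambda>t. Arg (w t)) \<longlongrightarrow> pi / 2) at_top"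
  using Im_orbit_pos mass_pos
  by (intro Arg_tendsto_pi_half_if_square_tendsto_neg[OF _ orbit_square_asymptotics])
    (auto intro: eventually_mono[OF eventually_ge_at_top[of 0]])

end

theorem lemma4p4:
  fixes phi :: "real \<Rightarrow> complex \<Rightarrow> complex"
    and G :: "complex \<Rightarrow> complex"
    and \<alpha> \<beta> :: real
    and \<mu> :: "real measure"
  assumes "semigroup_H phi" and "non_elliptic phi" and "DW_infinity phi" and "parabolic phi"
    and "inf_generator phi G"
    and "finite_measure \<mu>" and "sets \<mu> = sets borel"
    and "\<alpha> \<ge> 0"
    and "\<forall>z\<in>UHP. G z = of_real \<alpha> * z + of_real \<beta> +
            (LINT s|\<mu>. (1 + of_real s * z) / (of_real s - z))"
    and "\<alpha> = 0"
    and "integrable \<mu> (\<lambda>s. s\<^sup>2)"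
    and "\<beta> = (LINT s|\<mu>. s)"
  shows "\<forall>z\<in>UHP. filterlim (\<lambda>t. phi t z) at_infinity at_top \<and>
           ((\<lambda>t. Arg (phi t z)) \<longlongrightarrow> pi / 2) at_top"
proof (intro ballI conjI)
  fix z
  assume "z \<in> UHP"
  show to_infinity: "filterlim (\<lambda>t. phi t z) at_infinity at_top"
    using assms(3) \<open>z \<in> UHP\<close> unfolding DW_infinity_def by blast
  have in_UHP: "phi t z \<in> UHP" if "t \<ge> 0" for t
    using assms(1) \<open>z \<in> UHP\<close> that unfolding semigroup_H_def by blast
  interpret finite_second_moment \<mu>
    using assms(6,7,11) by (simp add: finite_second_moment_def finite_second_moment_axioms_def)
  have "G (phi t z) = cauchy_transform (phi t z)" if "t \<ge> 0" for t
    using assms(9,10,12) in_UHP[OF that] herglotz_integral_eq_cauchy_transform[of "phi t z"]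
    by (simp add: UHP_def)
  moreover have "((\<lambda>s. phi s z) has_vector_derivative G (phi t z)) (at t within {0..})" if "t \<ge> 0" for t
    using assms(5) \<open>z \<in> UHP\<close> that unfolding inf_generator_def by blast
  ultimately interpret herglotz_orbit \<mu> "\<lambda>t. phi t z"
    using in_UHP to_infinity by unfold_locales (simp_all add: UHP_def)
  show "((\<lambda>t. Arg (phi t z)) \<longlongrightarrow> pi / 2) at_top"
    by (rule orbit_Arg_tendsto_pi_half)
qed

end
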